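(* Let $K\subset\mathbb{R}^n$ be a closed convex set with diameter $d$, and let $r$ be the largest radius of a Euclidean ball fully contained in $K$. Then the LSE is minimax optimal (i.e. $\varepsilon_K(\sigma)\lesssim\varepsilon^*(\sigma)$) whenever $\sigma\lesssim r/\sqrt n$ or $\sigma\gtrsim d$.
   Context: Gaussian sequence model: $Y=\mu+\xi$, $\mu\in K$, $\xi\sim N(0,\sigma^2\mathbb{I}_n)$; LSE $\hat\mu=\operatorname{argmin}_{\nu\in K}\|Y-\nu\|_2^2$; $\varepsilon_K(\sigma)^2=\sup_{\mu\in K}\mathbb{E}_\mu\|\hat\mu-\mu\|_2^2$. $M(\eta,T)$: maximal cardinality of a subset of $T$ with pairwise distances $>\eta$; $M^{\mathrm{loc}}(\varepsilon)=\sup_{\theta\in K}M(\varepsilon/c^*,B(\theta,\varepsilon)\cap K)$ for a large absolute constant $c^*$ ($B$ the closed Euclidean ball); $\varepsilon^*(\sigma)=\sup\{\varepsilon:\varepsilon^2/\sigma^2\le\log M^{\mathrm{loc}}(\varepsilon)\}$, whose square is up to constants the minimax risk over $K$. $\lesssim,\gtrsim$ hide absolute constants. *)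

theory Defs
  imports "HOL-Analysis.Analysis" "HOL-Probability.Probability"
begin

text \<open>Points of R^n are represented as functions nat => real vanishing outside {..<n}
  (explicit carrier, so that constants can be uniform in the dimension n).\<close>

definition vecs :: "nat \<Rightarrow> (nat \<Rightarrow> real) set" where
  "vecs n = {x. \<forall>i\<ge>n. x i = 0}"

definition enorm :: "nat \<Rightarrow> (nat \<Rightarrow> real) \<Rightarrow> real" where
  "enorm n x = sqrt (\<Sum>i<n. (x i)\<^sup>2)"

definition edist :: "nat \<Rightarrow> (nat \<Rightarrow> real) \<Rightarrow> (nat \<Rightarrow> real) \<Rightarrow> real" where
  "edist n x y = enorm n (\<lambda>i. x i - y i)"

definition eball :: "nat \<Rightarrow> (nat \<Rightarrow> real) \<Rightarrow> real \<Rightarrow> (nat \<Rightarrow> real) set" where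
  "eball n \<theta> \<epsilon> = {x \<in> vecs n. edist n x \<theta> \<le> \<epsilon>}"

definition convex_vec :: "nat \<Rightarrow> (nat \<Rightarrow> real) set \<Rightarrow> bool" where
  "convex_vec n K \<longleftrightarrow> K \<subseteq> vecs n \<and>
     (\<forall>x\<in>K. \<forall>y\<in>K. \<forall>t::real. 0 \<le> t \<and> t \<le> 1 \<longrightarrow> (\<lambda>i. (1 - t) * x i + t * y i) \<in> K)"

definition closed_vec :: "nat \<Rightarrow> (nat \<Rightarrow> real) set \<Rightarrow> bool" where
  "closed_vec n K \<longleftrightarrow> K \<subseteq> vecs n \<and>
     (\<forall>s x. (\<forall>k. s k \<in> K) \<and> x \<in> vecs n \<and> (\<lambda>k. edist n (s k) x) \<longlonglongrightarrow> 0 \<longrightarrow> x \<in> K)"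

definition bounded_vec :: "nat \<Rightarrow> (nat \<Rightarrow> real) set \<Rightarrow> bool" where
  "bounded_vec n K \<longleftrightarrow> (\<exists>R. \<forall>x\<in>K. enorm n x \<le> R)"

definition diam_vec :: "nat \<Rightarrow> (nat \<Rightarrow> real) set \<Rightarrow> real" where
  "diam_vec n K = Sup {edist n x y | x y. x \<in> K \<and> y \<in> K}"

definition inradius :: "nat \<Rightarrow> (nat \<Rightarrow> real) set \<Rightarrow> real" where
  "inradius n K = Sup {\<rho>. 0 \<le> \<rho> \<and> (\<exists>x\<in>vecs n. eball n x \<rho> \<subseteq> K)}"

definition packing :: "nat \<Rightarrow> real \<Rightarrow> (nat \<Rightarrow> real) set \<Rightarrow> enat" where
  "packing n \<eta> T = Sup {enat (card S) | S. finite S \<and> S \<subseteq> T \<and>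
      (\<forall>x\<in>S. \<forall>y\<in>S. x \<noteq> y \<longrightarrow> edist n x y > \<eta>)}"

definition Mloc :: "nat \<Rightarrow> real \<Rightarrow> (nat \<Rightarrow> real) set \<Rightarrow> real \<Rightarrow> enat" where
  "Mloc n cstar K \<epsilon> = (SUP \<theta>\<in>K. packing n (\<epsilon> / cstar) (eball n \<theta> \<epsilon> \<inter> K))"

text \<open>eps*(sigma) = sup{eps : eps^2/sigma^2 <= log M^loc(eps)} (log of an infinite packing number
  read as +infinity).\<close>
definition eps_star :: "nat \<Rightarrow> real \<Rightarrow> (nat \<Rightarrow> real) set \<Rightarrow> real \<Rightarrow> real" where
  "eps_star n cstar K \<sigma> = Sup {\<epsilon>. 0 \<le> \<epsilon> \<and>
      (Mloc n cstar K \<epsilon> = \<infinity> \<or> \<epsilon>\<^sup>2 / \<sigma>\<^sup>2 \<le> ln (real (the_enat (Mloc n cstar K \<epsilon>))))}"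

definition gauss :: "nat \<Rightarrow> real \<Rightarrow> (nat \<Rightarrow> real) measure" where
  "gauss n \<sigma> = PiM {..<n} (\<lambda>_. density lborel (normal_density 0 \<sigma>))"

definition lse :: "nat \<Rightarrow> (nat \<Rightarrow> real) set \<Rightarrow> (nat \<Rightarrow> real) \<Rightarrow> (nat \<Rightarrow> real)" where
  "lse n K Y = (THE \<nu>. \<nu> \<in> K \<and> (\<forall>\<nu>'\<in>K. (edist n Y \<nu>)\<^sup>2 \<le> (edist n Y \<nu>')\<^sup>2))"

definition lse_risk :: "nat \<Rightarrow> real \<Rightarrow> (nat \<Rightarrow> real) set \<Rightarrow> ennreal" where
  "lse_risk n \<sigma> K = (SUP \<mu>\<in>K. \<integral>\<^sup>+ \<xi>. ennreal ((edist n (lse n K (\<lambda>i. if i < n then \<mu> i + \<xi> i else 0)) \<mu>)\<^sup>2) \<partial>gauss n \<sigma>)"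

end

theory Submission
  imports Defs
begin

text \<open>The least squares estimator is the metric projection onto \<open>K\<close>, and projecting onto a
  convex set does not increase the distance to any point of \<open>K\<close>. Hence its risk is at most
  \<open>E \<bar>\<xi>\<bar>\<^sup>2 = n \<sigma>\<^sup>2\<close>, and trivially at most \<open>diam K\<^sup>2\<close>. It remains to bound \<open>\<epsilon>*(\<sigma>)\<close> from
  below. If \<open>\<sigma> \<le> r / \<surd>n\<close>, the inscribed ball contains the vertices of a cube of half-side
  \<open>\<sigma> / 4\<close>, and a Gilbert-Varshamov family of at least \<open>exp (n / 16)\<close> of them with pairwise
  Hamming distance \<open>> n / 4\<close> is a local packing at scale \<open>\<surd>n \<sigma> / 4\<close>; so \<open>n \<sigma>\<^sup>2 \<le> 16 \<epsilon>*(\<sigma>)\<^sup>2\<close>.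
  If \<open>\<sigma> \<ge> 2 diam K\<close>, two points of \<open>K\<close> at distance \<open>> diam K / 2\<close> already form a local
  packing, so \<open>diam K \<le> 2 \<epsilon>*(\<sigma>)\<close>.\<close>

definition sqdist :: "nat \<Rightarrow> (nat \<Rightarrow> real) \<Rightarrow> (nat \<Rightarrow> real) \<Rightarrow> real" where
  "sqdist n x y = (\<Sum>i<n. (x i - y i)\<^sup>2)"

lemma sqdist_nonneg: "0 \<le> sqdist n x y"
  unfolding sqdist_def by (simp add: sum_nonneg)

lemma edist_eq_L2_set: "edist n x y = L2_set (\<lambda>i. x i - y i) {..<n}"
  unfolding edist_def enorm_def L2_set_def by simp

lemma power2_edist: "(edist n x y)\<^sup>2 = sqdist n x y"
  unfolding edist_def enorm_def sqdist_def by (simp add: sum_nonneg)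

lemma edist_nonneg: "0 \<le> edist n x y"
  by (simp add: edist_eq_L2_set)

lemma edist_commute: "edist n x y = edist n y x"
  unfolding edist_def enorm_def by (simp add: power2_commute)

lemma edist_self [simp]: "edist n x x = 0"
  by (simp add: edist_def enorm_def)

lemma edist_triangle: "edist n x z \<le> edist n x y + edist n y z"
  using L2_set_triangle_ineq[of "\<lambda>i. x i - y i" "\<lambda>i. y i - z i" "{..<n}"]
  by (simp add: edist_eq_L2_set)

lemma abs_coord_le_enorm: "i < n \<Longrightarrow> \<bar>x i\<bar> \<le> enorm n x"
  using member_le_L2_set[of "{..<n}" i "\<lambda>i. \<bar>x i\<bar>"] by (simp add: enorm_def L2_set_def)

lemma vecs_eqI:
  assumes "x \<in> vecs n" "y \<in> vecs n" "sqdist n x y = 0"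
  shows "x = y"
proof
  fix i
  show "x i = y i"
  proof (cases "i < n")
    case True
    then show ?thesis
      using assms(3) unfolding sqdist_def by (subst (asm) sum_nonneg_eq_0_iff) auto
  next
    case False
    then show ?thesis using assms(1,2) by (simp add: vecs_def)
  qed
qed

lemma edist_le_diam_vec:
  assumes "bounded_vec n K" "x \<in> K" "y \<in> K"
  shows "edist n x y \<le> diam_vec n K"
proof -
  obtain R where R: "\<And>z. z \<in> K \<Longrightarrow> enorm n z \<le> R"
    using assms(1) unfolding bounded_vec_def by blast
  have "edist n x y \<le> R + R" if "x \<in> K" "y \<in> K" for x y
  proof -
    have "edist n x y \<le> edist n x (\<lambda>_. 0) + edist n (\<lambda>_. 0) y" by (rule edist_triangle)
    also have "\<dots> = enorm n x + enorm n y" by (simp add: edist_commute[of n "\<lambda>_. 0"] edist_def enorm_def)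
    finally show ?thesis using R[OF that(1)] R[OF that(2)] by linarith
  qed
  then show ?thesis
    unfolding diam_vec_def using assms(2,3) by (intro cSup_upper) (auto simp: bdd_above_def)
qed

lemma diam_vec_nonneg: "bounded_vec n K \<Longrightarrow> K \<noteq> {} \<Longrightarrow> 0 \<le> diam_vec n K"
  using edist_le_diam_vec[of n K] edist_self by fastforce

lemma exists_edist_gt_if_less_diam_vec:
  assumes "K \<noteq> {}" "t < diam_vec n K"
  obtains x y where "x \<in> K" "y \<in> K" "t < edist n x y"
  using less_cSupD[of "{edist n x y | x y. x \<in> K \<and> y \<in> K}" t] assms
  unfolding diam_vec_def by blast

lemma exists_eball_subset_if_less_inradius:
  assumes "K \<noteq> {}" "K \<subseteq> vecs n" "\<epsilon> < inradius n K"
  obtains \<theta> where "\<theta> \<in> vecs n" "eball n \<theta> \<epsilon> \<subseteq> K"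
proof -
  let ?R = "{\<rho>. 0 \<le> \<rho> \<and> (\<exists>x\<in>vecs n. eball n x \<rho> \<subseteq> K)}"
  obtain k where k: "k \<in> K" using assms(1) by blast
  have "eball n k 0 \<subseteq> K"
  proof
    fix z assume "z \<in> eball n k 0"
    then have "z \<in> vecs n" "sqdist n z k = 0"
      using edist_nonneg[of n z k] by (auto simp: eball_def simp flip: power2_edist)
    then show "z \<in> K" using vecs_eqI[of z n k] k assms(2) by auto
  qed
  then have "0 \<in> ?R" using k assms(2) by blast
  then obtain \<rho> \<theta> where "\<epsilon> < \<rho>" "\<theta> \<in> vecs n" "eball n \<theta> \<rho> \<subseteq> K"
    using less_cSupD[of ?R \<epsilon>] assms(3) unfolding inradius_def by blast
  moreover have "eball n \<theta> \<epsilon> \<subseteq> eball n \<theta> \<rho>"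
    using \<open>\<epsilon> < \<rho>\<close> unfolding eball_def by auto
  ultimately show ?thesis using that by blast
qed

section \<open>The least squares estimator as a metric projection\<close>

lemma bounded_seq_has_convergent_subseq:
  fixes f :: "nat \<Rightarrow> nat \<Rightarrow> real"
  assumes bounded: "\<And>k. enorm n (f k) \<le> R"
  obtains x r where "x \<in> vecs n" "strict_mono r" "(\<lambda>k. edist n (f (r k)) x) \<longlonglongrightarrow> 0"
proof -
  have "bounded ((\<lambda>x. x i) ` range f)" if "i \<in> {..<n}" for i
    unfolding bounded_iff
    by (rule exI[of _ R]) (use that in \<open>auto intro: order_trans[OF abs_coord_le_enorm bounded]\<close>)
  then obtain l r where r: "strict_mono r"
    and lim: "\<And>e. e > 0 \<Longrightarrow> eventually (\<lambda>k. \<forall>i\<in>{..<n}. dist (f (r k) i) (l i) < e) sequentially"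
    using compact_lemma_general[where basis="{..<n}" and f=f and proj="\<lambda>x i. x i" and unproj="\<lambda>x. x"]
    by blast
  define x where "x i = (if i < n then l i else 0)" for i
  have "(\<lambda>k. f (r k) i) \<longlonglongrightarrow> x i" if "i < n" for i
    unfolding tendsto_iff x_def using that by (auto elim!: eventually_mono[OF lim])
  then have "(\<lambda>k. sqrt (\<Sum>i<n. (f (r k) i - x i)\<^sup>2)) \<longlonglongrightarrow> sqrt (\<Sum>i<n. (x i - x i)\<^sup>2)"
    by (intro tendsto_intros) auto
  then have "(\<lambda>k. edist n (f (r k)) x) \<longlonglongrightarrow> 0"
    by (simp add: edist_def enorm_def)
  moreover have "x \<in> vecs n" by (simp add: x_def vecs_def)
  ultimately show ?thesis using that r by blast
qed

lemma exists_nearest_point: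
  assumes ne: "K \<noteq> {}" and closed: "closed_vec n K" and bounded: "bounded_vec n K"
  obtains P where "P \<in> K" "\<And>z. z \<in> K \<Longrightarrow> edist n Y P \<le> edist n Y z"
proof -
  define m where "m = Inf (edist n Y ` K)"
  have bdd: "bdd_below (edist n Y ` K)"
    by (rule bdd_belowI[of _ 0]) (auto simp: edist_nonneg)
  have m_le: "m \<le> edist n Y z" if "z \<in> K" for z
    unfolding m_def using bdd that by (auto intro: cInf_lower)
  have "\<exists>z\<in>K. edist n Y z < m + inverse (real (Suc k))" for k
    using cInf_lessD[of "edist n Y ` K" "m + inverse (real (Suc k))"] ne unfolding m_def by auto
  then obtain f where fK: "\<And>k. f k \<in> K" and f_m: "\<And>k. edist n Y (f k) < m + inverse (real (Suc k))"
    by metis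
  obtain R where R: "\<And>z. z \<in> K \<Longrightarrow> enorm n z \<le> R" using bounded unfolding bounded_vec_def by blast
  obtain x r where x: "x \<in> vecs n" and r: "strict_mono r"
    and lim: "(\<lambda>k. edist n (f (r k)) x) \<longlonglongrightarrow> 0"
    using bounded_seq_has_convergent_subseq[of n f R, OF R[OF fK]] by blast
  have "(\<forall>k. s k \<in> K) \<and> z \<in> vecs n \<and> (\<lambda>k. edist n (s k) z) \<longlonglongrightarrow> 0 \<longrightarrow> z \<in> K" for s z
    using closed unfolding closed_vec_def by blast
  from this[of "\<lambda>k. f (r k)" x] have xK: "x \<in> K"
    using fK x lim by simp
  have "edist n Y x \<le> m"
  proof (rule LIMSEQ_le_const)
    show "(\<lambda>k. m + inverse (real (Suc k)) + edist n (f (r k)) x) \<longlonglongrightarrow> m"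
      using tendsto_add[OF tendsto_add[OF tendsto_const LIMSEQ_inverse_real_of_nat] lim] by simp
    have "edist n Y x \<le> m + inverse (real (Suc k)) + edist n (f (r k)) x" for k
    proof -
      have "inverse (real (Suc (r k))) \<le> inverse (real (Suc k))"
        using seq_suble[OF r, of k] by (simp add: field_simps)
      then show ?thesis
        using edist_triangle[of n Y x "f (r k)"] f_m[of "r k"] by linarith
    qed
    then show "\<exists>N. \<forall>k\<ge>N. edist n Y x \<le> m + inverse (real (Suc k)) + edist n (f (r k)) x"
      by blast
  qed
  then show ?thesis using that xK m_le by fastforce
qed

lemma sqdist_convex_combination:
  "sqdist n Y (\<lambda>i. (1 - t) * P i + t * \<mu> i)
    = sqdist n Y P - 2 * t * (\<Sum>i<n. (Y i - P i) * (\<mu> i - P i)) + t\<^sup>2 * sqdist n \<mu> P"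
proof -
  have "sqdist n Y (\<lambda>i. (1 - t) * P i + t * \<mu> i)
      = (\<Sum>i<n. (Y i - P i)\<^sup>2 - 2 * t * ((Y i - P i) * (\<mu> i - P i)) + t\<^sup>2 * (\<mu> i - P i)\<^sup>2)"
    unfolding sqdist_def by (intro sum.cong) (auto simp: power2_eq_square algebra_simps)
  then show ?thesis
    by (simp add: sqdist_def sum_subtractf sum.distrib sum_distrib_left)
qed

lemma sqdist_law_of_cosines:
  "sqdist n Y \<mu> = sqdist n Y P + sqdist n P \<mu> - 2 * (\<Sum>i<n. (Y i - P i) * (\<mu> i - P i))"
proof -
  have "sqdist n Y \<mu> = (\<Sum>i<n. (Y i - P i)\<^sup>2 + (P i - \<mu> i)\<^sup>2 - 2 * ((Y i - P i) * (\<mu> i - P i)))"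
    unfolding sqdist_def by (intro sum.cong) (auto simp: power2_eq_square algebra_simps)
  then show ?thesis
    by (simp add: sqdist_def sum_subtractf sum.distrib sum_distrib_left)
qed

lemma nearest_point_obtuse_angle:
  assumes convex: "convex_vec n K" and "P \<in> K" "\<mu> \<in> K"
    and nearest: "\<And>z. z \<in> K \<Longrightarrow> sqdist n Y P \<le> sqdist n Y z"
  shows "(\<Sum>i<n. (Y i - P i) * (\<mu> i - P i)) \<le> 0"
proof (rule ccontr)
  define I where "I = (\<Sum>i<n. (Y i - P i) * (\<mu> i - P i))"
  define Q where "Q = sqdist n \<mu> P"
  assume "\<not> ?thesis"
  then have I: "0 < I" unfolding I_def by simp
  have Q: "0 \<le> Q" unfolding Q_def by (rule sqdist_nonneg)
  \<comment> \<open>moving from \<open>P\<close> towards \<open>\<mu>\<close> by this fraction would get closer to \<open>Y\<close>\<close>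
  define t where "t = I / (I + Q)"
  have "0 \<le> t" "t \<le> 1" using I Q by (auto simp: t_def)
  then have "(\<lambda>i. (1 - t) * P i + t * \<mu> i) \<in> K"
    using convex \<open>P \<in> K\<close> \<open>\<mu> \<in> K\<close> unfolding convex_vec_def by blast
  then have "0 \<le> t * (t * Q - 2 * I)"
    using nearest sqdist_convex_combination[of n Y t P \<mu>]
    unfolding I_def Q_def by (fastforce simp: algebra_simps power2_eq_square)
  moreover have "0 < t" using I Q by (simp add: t_def)
  ultimately have "2 * I \<le> t * Q" by (simp add: zero_le_mult_iff)
  also have "t * Q \<le> I" using I Q by (simp add: t_def field_simps)
  finally show False using I by simp
qed

lemma nearest_point_unique:
  assumes convex: "convex_vec n K" and "a \<in> K" "b \<in> K"
    and "\<And>z. z \<in> K \<Longrightarrow> sqdist n Y a \<le> sqdist n Y z"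
    and "\<And>z. z \<in> K \<Longrightarrow> sqdist n Y b \<le> sqdist n Y z"
  shows "a = b"
proof -
  have "(\<Sum>i<n. (Y i - a i) * (b i - a i)) + (\<Sum>i<n. (Y i - b i) * (a i - b i)) = sqdist n a b"
    unfolding sqdist_def sum.distrib[symmetric] by (intro sum.cong) (auto simp: power2_eq_square algebra_simps)
  then have "sqdist n a b = 0"
    using nearest_point_obtuse_angle[OF convex, of a b Y] nearest_point_obtuse_angle[OF convex, of b a Y]
      sqdist_nonneg[of n a b] assms by fastforce
  moreover have "K \<subseteq> vecs n" using convex unfolding convex_vec_def by blast
  ultimately show ?thesis using vecs_eqI assms(2,3) by blast
qed

lemma lse_nearest:
  assumes "K \<noteq> {}" "closed_vec n K" "convex_vec n K" "bounded_vec n K"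
  shows "lse n K Y \<in> K" and "\<And>z. z \<in> K \<Longrightarrow> sqdist n Y (lse n K Y) \<le> sqdist n Y z"
proof -
  obtain P where P: "P \<in> K" "\<And>z. z \<in> K \<Longrightarrow> edist n Y P \<le> edist n Y z"
    using exists_nearest_point assms(1,2,4) by blast
  then have "\<And>z. z \<in> K \<Longrightarrow> sqdist n Y P \<le> sqdist n Y z"
    by (metis power2_edist edist_nonneg power_mono)
  then have "\<exists>!\<nu>. \<nu> \<in> K \<and> (\<forall>\<nu>'\<in>K. (edist n Y \<nu>)\<^sup>2 \<le> (edist n Y \<nu>')\<^sup>2)"
    using P(1) nearest_point_unique[OF assms(3)] unfolding power2_edist by blast
  from theI'[OF this] show "lse n K Y \<in> K" "\<And>z. z \<in> K \<Longrightarrow> sqdist n Y (lse n K Y) \<le> sqdist n Y z"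
    unfolding lse_def power2_edist by blast+
qed

lemma sqdist_lse_le:
  assumes "K \<noteq> {}" "closed_vec n K" "convex_vec n K" "bounded_vec n K" "\<mu> \<in> K"
  shows "sqdist n (lse n K Y) \<mu> \<le> sqdist n Y \<mu>"
proof -
  have "(\<Sum>i<n. (Y i - lse n K Y i) * (\<mu> i - lse n K Y i)) \<le> 0"
    using assms lse_nearest[OF assms(1-4)] by (intro nearest_point_obtuse_angle[of n K]) auto
  then show ?thesis
    using sqdist_law_of_cosines[of n Y \<mu> "lse n K Y"] sqdist_nonneg[of n Y "lse n K Y"] by linarith
qed

section \<open>Upper bounds on the risk\<close>

lemma prob_space_gauss: "\<sigma> > 0 \<Longrightarrow> prob_space (gauss n \<sigma>)"
  unfolding gauss_def by (intro prob_space_PiM prob_space_normal_density)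

lemma nn_integral_gauss_coord_sq:
  assumes \<sigma>: "\<sigma> > 0" and i: "i < n"
  shows "(\<integral>\<^sup>+ \<xi>. ennreal ((\<xi> i)\<^sup>2) \<partial>gauss n \<sigma>) = ennreal (\<sigma>\<^sup>2)"
proof -
  let ?N = "density lborel (normal_density 0 \<sigma>)"
  have "distr (gauss n \<sigma>) ?N (\<lambda>\<xi>. \<xi> i) = ?N"
    unfolding gauss_def using i \<sigma> by (intro distr_PiM_component prob_space_normal_density) auto
  moreover have "(\<integral>\<^sup>+ \<xi>. ennreal ((\<xi> i)\<^sup>2) \<partial>gauss n \<sigma>)
      = (\<integral>\<^sup>+ x. ennreal (x\<^sup>2) \<partial>distr (gauss n \<sigma>) ?N (\<lambda>\<xi>. \<xi> i))"
    by (subst nn_integral_distr) (auto simp: gauss_def i)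
  ultimately have "(\<integral>\<^sup>+ \<xi>. ennreal ((\<xi> i)\<^sup>2) \<partial>gauss n \<sigma>) = (\<integral>\<^sup>+ x. ennreal (x\<^sup>2) \<partial>?N)"
    by simp
  also have "\<dots> = (\<integral>\<^sup>+ x. ennreal (normal_density 0 \<sigma> x * x ^ (2 * 1)) \<partial>lborel)"
    by (subst nn_integral_density) (auto simp: ennreal_mult'[symmetric])
  also have "\<dots> = ennreal (\<sigma>\<^sup>2)"
  proof -
    have "has_bochner_integral lborel (\<lambda>x. normal_density 0 \<sigma> x * x ^ (2 * 1)) (\<sigma>\<^sup>2)"
      using normal_moment_even[OF \<sigma>, of 0 1] \<sigma> by (simp add: power2_eq_square)
    then show ?thesis
      by (subst nn_integral_eq_integral) (auto simp: has_bochner_integral_iff)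
  qed
  finally show ?thesis .
qed

lemma nn_integral_gauss_sqnorm:
  assumes "\<sigma> > 0"
  shows "(\<integral>\<^sup>+ \<xi>. ennreal (\<Sum>i<n. (\<xi> i)\<^sup>2) \<partial>gauss n \<sigma>) = ennreal (real n * \<sigma>\<^sup>2)"
proof -
  have "(\<integral>\<^sup>+ \<xi>. ennreal (\<Sum>i<n. (\<xi> i)\<^sup>2) \<partial>gauss n \<sigma>) = (\<Sum>i<n. \<integral>\<^sup>+ \<xi>. ennreal ((\<xi> i)\<^sup>2) \<partial>gauss n \<sigma>)"
    by (simp add: sum_ennreal[symmetric] nn_integral_sum gauss_def del: sum_ennreal)
  also have "\<dots> = ennreal (real n * \<sigma>\<^sup>2)"
    using nn_integral_gauss_coord_sq[OF assms]
    by (simp add: ennreal_mult' ennreal_of_nat_eq_real_of_nat)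
  finally show ?thesis .
qed

lemma lse_risk_le_nn_integral:
  assumes "\<And>\<mu> \<xi>. \<mu> \<in> K \<Longrightarrow> (edist n (lse n K (\<lambda>i. if i < n then \<mu> i + \<xi> i else 0)) \<mu>)\<^sup>2 \<le> g \<xi>"
  shows "lse_risk n \<sigma> K \<le> (\<integral>\<^sup>+ \<xi>. ennreal (g \<xi>) \<partial>gauss n \<sigma>)"
  unfolding lse_risk_def by (auto intro!: SUP_least nn_integral_mono ennreal_leI assms)

lemma lse_risk_le_dim:
  assumes "K \<noteq> {}" "closed_vec n K" "convex_vec n K" "bounded_vec n K" "\<sigma> > 0"
  shows "lse_risk n \<sigma> K \<le> ennreal (real n * \<sigma>\<^sup>2)"
proof -
  have "(edist n (lse n K (\<lambda>i. if i < n then \<mu> i + \<xi> i else 0)) \<mu>)\<^sup>2 \<le> (\<Sum>i<n. (\<xi> i)\<^sup>2)"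
    if "\<mu> \<in> K" for \<mu> \<xi>
    using sqdist_lse_le[OF assms(1-4) that, of "\<lambda>i. if i < n then \<mu> i + \<xi> i else 0"]
    by (simp add: power2_edist sqdist_def)
  then have "lse_risk n \<sigma> K \<le> (\<integral>\<^sup>+ \<xi>. ennreal (\<Sum>i<n. (\<xi> i)\<^sup>2) \<partial>gauss n \<sigma>)"
    by (rule lse_risk_le_nn_integral)
  then show ?thesis using nn_integral_gauss_sqnorm[OF assms(5)] by simp
qed

lemma lse_risk_le_diam:
  assumes "K \<noteq> {}" "closed_vec n K" "convex_vec n K" "bounded_vec n K" "\<sigma> > 0"
  shows "lse_risk n \<sigma> K \<le> ennreal ((diam_vec n K)\<^sup>2)"
proof -
  interpret prob_space "gauss n \<sigma>" using prob_space_gauss[OF assms(5)] .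
  have "(edist n (lse n K Y) \<mu>)\<^sup>2 \<le> (diam_vec n K)\<^sup>2" if "\<mu> \<in> K" for \<mu> Y
    using edist_le_diam_vec[OF assms(4) lse_nearest(1)[OF assms(1-4)] that]
    by (simp add: edist_nonneg power_mono)
  then have "lse_risk n \<sigma> K \<le> (\<integral>\<^sup>+ \<xi>. ennreal ((diam_vec n K)\<^sup>2) \<partial>gauss n \<sigma>)"
    by (rule lse_risk_le_nn_integral)
  then show ?thesis by (simp add: emeasure_space_1)
qed

section \<open>Gilbert-Varshamov codes\<close>

text \<open>Subsets of \<open>{..<n}\<close> stand for the vertices of the cube \<open>{0,1}\<^sup>n\<close>, and
  \<open>card (sym_diff A B)\<close> is their Hamming distance.\<close>

definition hamming_ball :: "nat \<Rightarrow> nat set \<Rightarrow> nat \<Rightarrow> nat set set" where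
  "hamming_ball n B d = {A \<in> Pow {..<n}. card (sym_diff A B) \<le> d}"

definition hamming_separated :: "nat \<Rightarrow> nat \<Rightarrow> nat set set \<Rightarrow> bool" where
  "hamming_separated n d C \<longleftrightarrow>
     C \<subseteq> Pow {..<n} \<and> (\<forall>A\<in>C. \<forall>B\<in>C. A \<noteq> B \<longrightarrow> d < card (sym_diff A B))"

lemma finite_hamming_ball: "finite (hamming_ball n B d)"
  unfolding hamming_ball_def by simp

lemma sum_power_card_Pow:
  fixes l :: "'a :: comm_semiring_1"
  assumes "finite S"
  shows "(\<Sum>X\<in>Pow S. l ^ card X) = (l + 1) ^ card S"
  using prod_add[OF assms, of "\<lambda>_. l" "\<lambda>_. 1"] assms
  by (simp add: finite_subset)

lemma card_hamming_ball_empty_le: "real (card (hamming_ball n {} d)) \<le> (4/3) ^ n * 3 ^ d"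
proof -
  have "real (card (hamming_ball n {} d)) * (1/3) ^ d = (\<Sum>A\<in>hamming_ball n {} d. (1/3) ^ d)"
    by simp
  also have "\<dots> \<le> (\<Sum>A\<in>hamming_ball n {} d. (1/3::real) ^ card A)"
    by (intro sum_mono power_decreasing) (auto simp: hamming_ball_def)
  also have "\<dots> \<le> (\<Sum>A\<in>Pow {..<n}. (1/3) ^ card A)"
    by (intro sum_mono2) (auto simp: hamming_ball_def)
  also have "\<dots> = (4/3) ^ n"
    by (simp add: sum_power_card_Pow)
  finally show ?thesis
    by (simp add: field_simps)
qed

lemma card_hamming_ball:
  assumes "B \<subseteq> {..<n}"
  shows "card (hamming_ball n B d) = card (hamming_ball n {} d)"
proof (rule bij_betw_same_card)
  have involution: "sym_diff (sym_diff A B) B = A" for A :: "nat set"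
    by blast
  show "bij_betw (\<lambda>A. sym_diff A B) (hamming_ball n B d) (hamming_ball n {} d)"
    by (rule bij_betw_byWitness[where f'="\<lambda>A. sym_diff A B"])
      (use assms in \<open>auto simp: hamming_ball_def involution\<close>)
qed

lemma exists_maximal_hamming_separated:
  obtains C where "hamming_separated n d C" "Pow {..<n} \<subseteq> (\<Union>B\<in>C. hamming_ball n B d)"
proof -
  have "card C < Suc (2 ^ n)" if "hamming_separated n d C" for C
    using that card_mono[of "Pow {..<n}" C] by (simp add: hamming_separated_def card_Pow)
  moreover have "hamming_separated n d {}"
    by (simp add: hamming_separated_def)
  ultimately obtain C where C: "hamming_separated n d C"
    and max: "\<And>C'. hamming_separated n d C' \<Longrightarrow> card C' \<le> card C"
    using ex_has_greatest_nat[of "hamming_separated n d" "{}" card "Suc (2 ^ n)"] by blast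
  have "A \<in> (\<Union>B\<in>C. hamming_ball n B d)" if A: "A \<subseteq> {..<n}" for A
  proof (rule ccontr)
    assume far: "A \<notin> (\<Union>B\<in>C. hamming_ball n B d)"
    then have "A \<notin> C" using A by (auto simp: hamming_ball_def)
    moreover have "hamming_separated n d (insert A C)"
      using C A far by (auto simp: hamming_separated_def hamming_ball_def Un_commute)
    moreover have "finite C"
      using C finite_subset by (auto simp: hamming_separated_def)
    ultimately show False
      using max[of "insert A C"] by simp
  qed
  then show ?thesis using that C by blast
qed

lemma gilbert_varshamov:
  obtains C where "hamming_separated n d C" "2 ^ n \<le> card C * card (hamming_ball n {} d)"
proof -
  obtain C where C: "hamming_separated n d C" and cover: "Pow {..<n} \<subseteq> (\<Union>B\<in>C. hamming_ball n B d)"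
    by (rule exists_maximal_hamming_separated)
  have finC: "finite C"
    using C finite_subset by (auto simp: hamming_separated_def)
  have "2 ^ n = card (Pow {..<n})"
    by (simp add: card_Pow)
  also have "\<dots> \<le> card (\<Union>B\<in>C. hamming_ball n B d)"
    using cover finC by (intro card_mono finite_UN_I finite_hamming_ball)
  also have "\<dots> \<le> (\<Sum>B\<in>C. card (hamming_ball n B d))"
    by (rule card_UN_le[OF finC])
  also have "\<dots> = (\<Sum>B\<in>C. card (hamming_ball n {} d))"
    using C by (intro sum.cong refl card_hamming_ball) (auto simp: hamming_separated_def)
  finally show ?thesis
    using that[OF C] by simp
qed

lemma ln_27_16_ge: "1/4 \<le> ln (27/16 :: real)"
proof -
  have "exp (1/4 :: real) ^ 4 = exp 1"
    by (simp flip: exp_of_nat_mult)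
  also have "\<dots> \<le> 3"
    by (rule exp_le)
  also have "\<dots> < (27/16) ^ 4"
    by (simp add: power_divide)
  finally show ?thesis
    by (subst ln_ge_iff) (auto dest: power_less_imp_less_base)
qed

text \<open>The rate \<open>ln 2 - ln (4/3) - (ln 3)/4\<close> of the Gilbert-Varshamov bound at radius \<open>n/4\<close>
  equals \<open>ln (27/16) / 4\<close>.\<close>

lemma ln_ge_of_gilbert_varshamov_bound:
  assumes "0 < c" "(2::real) ^ n \<le> c * ((4/3) ^ n * 3 ^ (n div 4))"
  shows "real n / 16 \<le> ln c"
proof -
  have ln_4_3: "ln (4/3 :: real) = 2 * ln 2 - ln 3"
    using ln_div[of 4 3] ln_realpow[of 2 2] by simp
  have ln_27_16: "ln (27/16 :: real) = 3 * ln 3 - 4 * ln 2"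
    using ln_div[of 27 16] ln_realpow[of 3 3] ln_realpow[of 2 4] by simp
  have "ln ((2::real) ^ n) \<le> ln (c * ((4/3) ^ n * 3 ^ (n div 4)))"
    using assms by (intro ln_mono) auto
  then have "real n * ln 2 \<le> ln c + real n * ln (4/3) + real (n div 4) * ln 3"
    using assms(1) by (simp add: ln_mult ln_realpow)
  moreover have "real (n div 4) * ln 3 \<le> (real n * ln 3) / 4"
    using mult_right_mono[of "real (n div 4)" "real n / 4" "ln 3"] by (simp add: real_of_nat_div)
  moreover have "real n * ln (4/3) = 2 * (real n * ln 2) - real n * ln 3"
    unfolding ln_4_3 by (simp add: algebra_simps)
  moreover have "real n * ln (27/16) = 3 * (real n * ln 3) - 4 * (real n * ln 2)"
    unfolding ln_27_16 by (simp add: algebra_simps)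
  moreover have "real n / 4 \<le> real n * ln (27/16)"
    using mult_left_mono[OF ln_27_16_ge, of "real n"] by simp
  ultimately show ?thesis
    by linarith
qed

lemma exists_hamming_separated_ln_card:
  obtains C where "hamming_separated n (n div 4) C" "real n / 16 \<le> ln (real (card C))"
proof -
  obtain C where C: "hamming_separated n (n div 4) C"
    and GV: "2 ^ n \<le> card C * card (hamming_ball n {} (n div 4))"
    by (rule gilbert_varshamov)
  have "(2::real) ^ n \<le> real (card C) * real (card (hamming_ball n {} (n div 4)))"
    using GV by (metis of_nat_le_iff of_nat_mult of_nat_numeral of_nat_power)
  also have "\<dots> \<le> real (card C) * ((4/3) ^ n * 3 ^ (n div 4))"
    by (intro mult_left_mono card_hamming_ball_empty_le) simp
  finally have "real n / 16 \<le> ln (real (card C))"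
    using GV by (intro ln_ge_of_gilbert_varshamov_bound) (auto intro!: Nat.gr0I)
  then show ?thesis
    using that C by blast
qed

section \<open>Lower bounds on \<open>\<epsilon>*(\<sigma>)\<close>\<close>

lemma card_le_Mloc:
  assumes "\<theta> \<in> K" "finite S" "S \<subseteq> eball n \<theta> \<epsilon> \<inter> K"
    and "\<And>x y. x \<in> S \<Longrightarrow> y \<in> S \<Longrightarrow> x \<noteq> y \<Longrightarrow> \<epsilon> / cstar < edist n x y"
  shows "enat (card S) \<le> Mloc n cstar K \<epsilon>"
proof -
  have "enat (card S) \<le> packing n (\<epsilon> / cstar) (eball n \<theta> \<epsilon> \<inter> K)"
    unfolding packing_def using assms(2-4) by (intro Sup_upper) blast
  also have "\<dots> \<le> Mloc n cstar K \<epsilon>"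
    unfolding Mloc_def using assms(1) by (rule SUP_upper)
  finally show ?thesis .
qed

lemma Mloc_le_one:
  assumes "bounded_vec n K" "0 < cstar" "cstar * diam_vec n K < \<epsilon>"
  shows "Mloc n cstar K \<epsilon> \<le> 1"
  unfolding Mloc_def packing_def
proof (intro SUP_least Sup_least, clarify)
  fix \<theta> S
  assume S: "finite S" "S \<subseteq> eball n \<theta> \<epsilon> \<inter> K"
    "\<forall>x\<in>S. \<forall>y\<in>S. x \<noteq> y \<longrightarrow> \<epsilon> / cstar < edist n x y"
  have "diam_vec n K < \<epsilon> / cstar"
    using assms(2,3) by (simp add: field_simps)
  then have "x = y" if "x \<in> S" "y \<in> S" for x y
    using S edist_le_diam_vec[OF assms(1), of x y] that by force
  then show "enat (card S) \<le> 1"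
    using card_le_Suc0_iff_eq[OF S(1)] by (simp add: one_enat_def)
qed

lemma le_eps_star:
  assumes "bounded_vec n K" "0 < cstar" "\<sigma> \<noteq> 0" "0 \<le> \<epsilon>" "0 < m"
    and "enat m \<le> Mloc n cstar K \<epsilon>" "\<epsilon>\<^sup>2 / \<sigma>\<^sup>2 \<le> ln (real m)"
  shows "\<epsilon> \<le> eps_star n cstar K \<sigma>"
proof -
  let ?E = "{\<epsilon>. 0 \<le> \<epsilon> \<and> (Mloc n cstar K \<epsilon> = \<infinity> \<or>
      \<epsilon>\<^sup>2 / \<sigma>\<^sup>2 \<le> ln (real (the_enat (Mloc n cstar K \<epsilon>))))}"
  have "\<epsilon>' \<le> max 0 (cstar * diam_vec n K)" if "\<epsilon>' \<in> ?E" for \<epsilon>'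
  proof (rule ccontr)
    assume "\<not> ?thesis"
    then have "0 < \<epsilon>'" "Mloc n cstar K \<epsilon>' \<le> 1"
      using Mloc_le_one[OF assms(1,2)] by auto
    then obtain k where k: "Mloc n cstar K \<epsilon>' = enat k" "k \<le> 1"
      by (cases "Mloc n cstar K \<epsilon>'") (auto simp: one_enat_def)
    then have "ln (real k) \<le> 0"
      by (cases "k = 0") auto
    moreover have "0 < \<epsilon>'\<^sup>2 / \<sigma>\<^sup>2"
      using \<open>0 < \<epsilon>'\<close> assms(3) by simp
    ultimately show False
      using that k(1) by simp
  qed
  moreover have "\<epsilon> \<in> ?E"
  proof (cases "Mloc n cstar K \<epsilon>")
    case (enat k)
    then have "ln (real m) \<le> ln (real k)"
      using assms(5,6) by simp
    then show ?thesis
      using assms(4,7) enat by simp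
  qed (use assms(4) in simp)
  ultimately show ?thesis
    unfolding eps_star_def by (intro cSup_upper bdd_aboveI) auto
qed

definition cube_vertex :: "nat \<Rightarrow> (nat \<Rightarrow> real) \<Rightarrow> real \<Rightarrow> nat set \<Rightarrow> nat \<Rightarrow> real" where
  "cube_vertex n \<theta> \<delta> A = (\<lambda>i. if i < n then \<theta> i + (if i \<in> A then \<delta> else - \<delta>) else 0)"

lemma cube_vertex_in_vecs: "cube_vertex n \<theta> \<delta> A \<in> vecs n"
  by (simp add: cube_vertex_def vecs_def)

lemma sqdist_cube_vertex_center: "sqdist n (cube_vertex n \<theta> \<delta> A) \<theta> = real n * \<delta>\<^sup>2"
proof -
  have "sqdist n (cube_vertex n \<theta> \<delta> A) \<theta> = (\<Sum>i<n. \<delta>\<^sup>2)"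
    unfolding sqdist_def cube_vertex_def by (intro sum.cong) auto
  then show ?thesis by simp
qed

lemma sqdist_cube_vertices:
  assumes "A \<subseteq> {..<n}" "B \<subseteq> {..<n}"
  shows "sqdist n (cube_vertex n \<theta> \<delta> A) (cube_vertex n \<theta> \<delta> B) = 4 * \<delta>\<^sup>2 * real (card (sym_diff A B))"
proof -
  have "sqdist n (cube_vertex n \<theta> \<delta> A) (cube_vertex n \<theta> \<delta> B)
      = (\<Sum>i<n. if i \<in> sym_diff A B then 4 * \<delta>\<^sup>2 else 0)"
    unfolding sqdist_def cube_vertex_def by (intro sum.cong) (auto simp: power2_eq_square)
  also have "\<dots> = (\<Sum>i\<in>sym_diff A B. 4 * \<delta>\<^sup>2)"
    using assms by (intro sum.mono_neutral_cong_right) auto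
  also have "\<dots> = 4 * \<delta>\<^sup>2 * real (card (sym_diff A B))"
    by simp
  finally show ?thesis .
qed

lemma card_le_Mloc_cube_vertices:
  assumes cstar: "1 \<le> cstar" and \<delta>: "0 < \<delta>" and \<theta>: "\<theta> \<in> vecs n"
    and ball: "eball n \<theta> (sqrt (real n) * \<delta>) \<subseteq> K" and C: "hamming_separated n (n div 4) C"
  shows "enat (card C) \<le> Mloc n cstar K (sqrt (real n) * \<delta>)"
proof -
  define \<epsilon> where "\<epsilon> = sqrt (real n) * \<delta>"
  define v where "v = cube_vertex n \<theta> \<delta>"
  have \<epsilon>: "0 \<le> \<epsilon>" "\<epsilon>\<^sup>2 = real n * \<delta>\<^sup>2"
    using \<delta> by (auto simp: \<epsilon>_def power_mult_distrib)
  have C_sub: "C \<subseteq> Pow {..<n}" and "finite C"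
    using C finite_subset by (auto simp: hamming_separated_def)
  have far: "\<epsilon> < edist n (v A) (v B)" if "A \<in> C" "B \<in> C" "A \<noteq> B" for A B
  proof -
    have "n < 4 * card (sym_diff A B)"
      using C that unfolding hamming_separated_def by fastforce
    then have "\<epsilon>\<^sup>2 < 4 * \<delta>\<^sup>2 * real (card (sym_diff A B))"
      unfolding \<epsilon>(2) using \<delta> by (simp add: mult.commute mult_strict_right_mono flip: of_nat_mult)
    also have "\<dots> = (edist n (v A) (v B))\<^sup>2"
      using C_sub that by (simp add: v_def power2_edist sqdist_cube_vertices subset_iff)
    finally show ?thesis
      by (rule power_less_imp_less_base) (rule edist_nonneg)
  qed
  have "inj_on v C"
  proof (rule inj_onI)
    fix A B assume "A \<in> C" "B \<in> C" "v A = v B"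
    then show "A = B" using far[of A B] \<epsilon>(1) by (cases "A = B") auto
  qed
  have "(edist n (v A) \<theta>)\<^sup>2 = \<epsilon>\<^sup>2" for A
    unfolding power2_edist v_def sqdist_cube_vertex_center \<epsilon>(2) ..
  then have "edist n (v A) \<theta> = \<epsilon>" for A
    using \<epsilon>(1) by (intro power2_eq_imp_eq[OF _ edist_nonneg]) auto
  then have "v ` C \<subseteq> eball n \<theta> \<epsilon>"
    by (auto simp: eball_def v_def cube_vertex_in_vecs)
  then have sub: "v ` C \<subseteq> eball n \<theta> \<epsilon> \<inter> K"
    using ball unfolding \<epsilon>_def by blast
  have "\<theta> \<in> K"
    using ball \<theta> \<epsilon>(1) by (auto simp: eball_def \<epsilon>_def)
  have "\<epsilon> / cstar \<le> \<epsilon>"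
    using mult_left_mono[OF cstar \<epsilon>(1)] cstar by (simp add: divide_le_eq)
  then have sep: "\<epsilon> / cstar < edist n x y" if "x \<in> v ` C" "y \<in> v ` C" "x \<noteq> y" for x y
    using that far by fastforce
  have "enat (card (v ` C)) \<le> Mloc n cstar K \<epsilon>"
    by (rule card_le_Mloc[OF \<open>\<theta> \<in> K\<close> _ sub sep]) (simp add: \<open>finite C\<close>)
  then show ?thesis
    by (simp add: card_image[OF \<open>inj_on v C\<close>] \<epsilon>_def)
qed

lemma le_eps_star_if_eball_subset:
  assumes n: "1 \<le> n" and cstar: "1 \<le> cstar" and \<sigma>: "0 < \<sigma>" and bounded: "bounded_vec n K"
    and \<theta>: "\<theta> \<in> vecs n" and ball: "eball n \<theta> (sqrt (real n) * (\<sigma> / 4)) \<subseteq> K"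
  shows "sqrt (real n) * (\<sigma> / 4) \<le> eps_star n cstar K \<sigma>"
proof -
  obtain C where C: "hamming_separated n (n div 4) C" and ln_card: "real n / 16 \<le> ln (real (card C))"
    by (rule exists_hamming_separated_ln_card)
  have pos: "0 < card C"
    using ln_card n by (intro Nat.gr0I) auto
  have M: "enat (card C) \<le> Mloc n cstar K (sqrt (real n) * (\<sigma> / 4))"
    using card_le_Mloc_cube_vertices[OF cstar _ \<theta> ball C] \<sigma> by simp
  have "(sqrt (real n) * (\<sigma> / 4))\<^sup>2 / \<sigma>\<^sup>2 = real n / 16"
    using \<sigma> by (simp add: power_mult_distrib power_divide)
  then have "(sqrt (real n) * (\<sigma> / 4))\<^sup>2 / \<sigma>\<^sup>2 \<le> ln (real (card C))"
    using ln_card by linarith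
  then show ?thesis
    using le_eps_star[OF bounded _ _ _ pos M] cstar \<sigma> by simp
qed

lemma le_eps_star_if_two_points:
  assumes cstar: "1 < cstar" and \<sigma>: "0 < \<sigma>" and bounded: "bounded_vec n K" and K: "K \<subseteq> vecs n"
    and x: "x \<in> K" and y: "y \<in> K" and close: "2 * edist n x y \<le> \<sigma>"
  shows "edist n x y \<le> eps_star n cstar K \<sigma>"
proof -
  let ?\<epsilon> = "edist n x y"
  have "{x, y} \<subseteq> eball n x ?\<epsilon> \<inter> K"
    using x y K by (auto simp: eball_def edist_commute edist_nonneg)
  moreover have "?\<epsilon> / cstar < edist n u w" if "u \<in> {x, y}" "w \<in> {x, y}" "u \<noteq> w" for u w
  proof -
    have "sqdist n x y \<noteq> 0"
      using that x y K vecs_eqI[of x n y] by blast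
    then have "0 < ?\<epsilon>"
      using edist_nonneg[of n x y] power2_edist[of n x y] by (auto simp: less_le)
    then show ?thesis
      using that cstar by (auto simp: divide_less_eq edist_commute)
  qed
  ultimately have M: "enat (card {x, y}) \<le> Mloc n cstar K ?\<epsilon>"
    by (intro card_le_Mloc[OF x]) auto
  have "?\<epsilon>\<^sup>2 / \<sigma>\<^sup>2 \<le> ln (real (card {x, y}))"
  proof (cases "x = y")
    case False
    have "(2 * ?\<epsilon>)\<^sup>2 \<le> \<sigma>\<^sup>2"
      using close edist_nonneg[of n x y] by (intro power_mono) auto
    then have "?\<epsilon>\<^sup>2 / \<sigma>\<^sup>2 \<le> 1/4"
      using \<sigma> by (simp add: power_mult_distrib divide_le_eq)
    also have "\<dots> \<le> ln 2"
      using ln2_ge_two_thirds by simp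
    finally show ?thesis using False by simp
  qed simp
  moreover have "0 < card {x, y}"
    by (simp add: card_gt_0_iff)
  ultimately show ?thesis
    using le_eps_star[OF bounded _ _ edist_nonneg _ M] cstar \<sigma> by simp
qed

lemma lse_risk_le_eps_star_if_small_noise:
  assumes n: "1 \<le> n" and K: "K \<noteq> {}" "closed_vec n K" "convex_vec n K" "bounded_vec n K"
    and cstar: "1 \<le> cstar" and \<sigma>: "0 < \<sigma>" and noise: "\<sigma> \<le> inradius n K / sqrt (real n)"
  shows "lse_risk n \<sigma> K \<le> ennreal ((4 * eps_star n cstar K \<sigma>)\<^sup>2)"
proof -
  have vecs: "K \<subseteq> vecs n"
    using K(3) by (simp add: convex_vec_def)
  have "sqrt (real n) * (\<sigma> / 4) < sqrt (real n) * \<sigma>"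
    using n \<sigma> by simp
  also have "\<dots> \<le> inradius n K"
    using n noise by (simp add: pos_le_divide_eq mult.commute)
  finally obtain \<theta> where "\<theta> \<in> vecs n" "eball n \<theta> (sqrt (real n) * (\<sigma> / 4)) \<subseteq> K"
    by (rule exists_eball_subset_if_less_inradius[OF K(1) vecs])
  then have "sqrt (real n) * (\<sigma> / 4) \<le> eps_star n cstar K \<sigma>"
    using le_eps_star_if_eball_subset n cstar \<sigma> K(4) by simp
  then have "real n * \<sigma>\<^sup>2 \<le> (4 * eps_star n cstar K \<sigma>)\<^sup>2"
    using power_mono[of "sqrt (real n) * \<sigma>" "4 * eps_star n cstar K \<sigma>" 2] \<sigma>
    by (simp add: power_mult_distrib)
  then show ?thesis
    using lse_risk_le_dim[OF K \<sigma>] by (simp add: order_trans)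
qed

lemma lse_risk_le_eps_star_if_large_noise:
  assumes K: "K \<noteq> {}" "closed_vec n K" "convex_vec n K" "bounded_vec n K"
    and cstar: "1 < cstar" and \<sigma>: "0 < \<sigma>" and noise: "2 * diam_vec n K \<le> \<sigma>"
  shows "lse_risk n \<sigma> K \<le> ennreal ((4 * eps_star n cstar K \<sigma>)\<^sup>2)"
proof -
  have vecs: "K \<subseteq> vecs n"
    using K(3) by (simp add: convex_vec_def)
  have d: "0 \<le> diam_vec n K"
    using diam_vec_nonneg K by blast
  have "diam_vec n K \<le> 2 * eps_star n cstar K \<sigma>"
  proof (cases "diam_vec n K = 0")
    case False
    then have "diam_vec n K / 2 < diam_vec n K"
      using d by simp
    then obtain x y where "x \<in> K" "y \<in> K" "diam_vec n K / 2 < edist n x y"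
      using exists_edist_gt_if_less_diam_vec[OF K(1)] by blast
    then show ?thesis
      using le_eps_star_if_two_points[OF cstar \<sigma> K(4) vecs] edist_le_diam_vec[OF K(4)] noise
      by fastforce
  next
    case True
    obtain x where "x \<in> K" using K(1) by blast
    then show ?thesis
      using le_eps_star_if_two_points[OF cstar \<sigma> K(4) vecs, of x x] True \<sigma> by simp
  qed
  then have "diam_vec n K \<le> 4 * eps_star n cstar K \<sigma>"
    using d by linarith
  then have "(diam_vec n K)\<^sup>2 \<le> (4 * eps_star n cstar K \<sigma>)\<^sup>2"
    using d by (rule power_mono)
  then show ?thesis
    using lse_risk_le_diam[OF K \<sigma>] by (simp add: order_trans)
qed

theorem mainTheorem18:
  shows "\<exists>c0>0. \<forall>cstar\<ge>c0. \<exists>C>0. \<exists>c1>0. \<exists>c2>0.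
    \<forall>(n::nat) (K::(nat \<Rightarrow> real) set) (\<sigma>::real).
      n \<ge> 1 \<and> K \<noteq> {} \<and> K \<subseteq> vecs n \<and> closed_vec n K \<and> convex_vec n K \<and> bounded_vec n K
      \<and> \<sigma> > 0
      \<and> (\<sigma> \<le> c1 * inradius n K / sqrt (real n) \<or> \<sigma> \<ge> c2 * diam_vec n K)
      \<longrightarrow> lse_risk n \<sigma> K \<le> ennreal ((C * eps_star n cstar K \<sigma>)\<^sup>2)"
proof -
  have bound: "lse_risk n \<sigma> K \<le> ennreal ((4 * eps_star n cstar K \<sigma>)\<^sup>2)"
    if "2 \<le> cstar" and "n \<ge> 1 \<and> K \<noteq> {} \<and> K \<subseteq> vecs n \<and> closed_vec n K \<and> convex_vec n K
      \<and> bounded_vec n K \<and> \<sigma> > 0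
      \<and> (\<sigma> \<le> 1 * inradius n K / sqrt (real n) \<or> \<sigma> \<ge> 2 * diam_vec n K)"
    for cstar :: real and n K \<sigma>
    using that lse_risk_le_eps_star_if_small_noise[of n K cstar \<sigma>]
      lse_risk_le_eps_star_if_large_noise[of K n cstar \<sigma>] by auto
  show ?thesis
    apply (rule exI[of _ "2::real"], rule conjI, simp, intro allI impI)
    apply (rule exI[of _ "4::real"], rule conjI, simp)
    apply (rule exI[of _ "1::real"], rule conjI, simp)
    apply (rule exI[of _ "2::real"], rule conjI, simp)
    using bound by blast
qed

end
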